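(* For $(\eta,\zeta,\tau)\in\mathbb R^3$ with $\tau\ne0$ let $T_1(\eta,\zeta,\tau):=\dfrac{w^3}{\tau^2}+\dfrac{27}{4}$, where $w:=(\eta+i)^2+(\zeta+i)^2$. There exists a compact set $K\subset\mathbb R^3$ such that $|T_1(\eta,\zeta,\tau)|\ge\frac{27}{8}$ for all $(\eta,\zeta,\tau)\in\mathbb R^3\setminus K$ with $\tau\neq0$. *)

theory Defs
  imports "HOL-Analysis.Analysis"
begin

definition T1 :: "real \<Rightarrow> real \<Rightarrow> real \<Rightarrow> complex" where
  "T1 \<eta> \<zeta> \<tau> =
     (let w = (complex_of_real \<eta> + \<i>)^2 + (complex_of_real \<zeta> + \<i>)^2
      in w^3 / (complex_of_real \<tau>)^2 + 27/4)"

end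

theory Submission
  imports Defs
begin

text \<open>If \<open>|T\<^sub>1| < 27/8\<close> then \<open>u = w\<^sup>3/\<tau>\<^sup>2\<close> lies within \<open>27/8\<close> of \<open>-27/4\<close>, so
  \<open>Re (w\<^sup>3) < 0\<close> and \<open>|w|\<^sup>3 \<ge> 27/8 \<tau>\<^sup>2\<close>. Writing \<open>w = a + i b\<close> with \<open>a = \<eta>\<^sup>2 + \<zeta>\<^sup>2 - 2\<close> and
  \<open>b = 2(\<eta> + \<zeta>)\<close>, we have \<open>b\<^sup>2 \<le> 8(a + 2)\<close>, and \<open>Re (w\<^sup>3) = a(a\<^sup>2 - 3b\<^sup>2) < 0\<close> then forces
  \<open>a < 26\<close>. Hence \<open>\<eta>, \<zeta>\<close> and \<open>|w|\<close> are bounded, and so is \<open>\<tau>\<close>.\<close>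

lemma shifted_squares_sum_eq:
  "(complex_of_real x + \<i>)^2 + (complex_of_real y + \<i>)^2 = Complex (x^2 + y^2 - 2) (2 * (x + y))"
  by (simp add: complex_eq_iff power2_eq_square algebra_simps)

lemma Re_Complex_cube: "Re ((Complex a b)^3) = a^3 - 3 * a * b^2"
  by (simp add: power3_eq_cube power2_eq_square algebra_simps)

lemma near_negative_real:
  fixes u :: complex and c :: real
  assumes "cmod (u + of_real c) < c / 2"
  shows "Re u < 0" and "c / 2 < cmod u"
proof -
  have "Re u + c \<le> cmod (u + of_real c)"
    using abs_Re_le_cmod[of "u + of_real c"] by simp
  then show "Re u < 0"
    using assms norm_ge_zero[of "u + of_real c"] by linarith
  have "c \<le> cmod (u + of_real c) + cmod u"
    using norm_triangle_ineq4[of "u + of_real c" u] assms by auto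
  then show "c / 2 < cmod u"
    using assms by linarith
qed

lemma cubic_negative_imp_bounded:
  fixes a b :: real
  assumes "b^2 \<le> 8 * (a + 2)" and "a^3 - 3 * a * b^2 < 0"
  shows "a < 26"
proof (rule ccontr)
  assume "\<not> a < 26"
  then have a: "a \<ge> 26" by simp
  have "a * (a^2 - 3 * b^2) < 0"
    using assms(2) by (simp add: algebra_simps power3_eq_cube power2_eq_square)
  then have "a^2 < 3 * b^2"
    using a by (simp add: mult_less_0_iff)
  also have "\<dots> \<le> 24 * a + 48"
    using assms(1) by simp
  finally have "a^2 < 24 * a + 48" .
  moreover have "26 * a \<le> a^2"
    using a by (simp add: power2_eq_square)
  ultimately show False
    using a by linarith
qed

lemma T1_small_imp_bounded:
  fixes \<eta> \<zeta> \<tau> :: real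
  assumes "\<tau> \<noteq> 0" and "cmod (T1 \<eta> \<zeta> \<tau>) < 27/8"
  shows "\<eta>^2 + \<zeta>^2 + \<tau>^2 \<le> 10000"
proof -
  define a where "a = \<eta>^2 + \<zeta>^2 - 2"
  define b where "b = 2 * (\<eta> + \<zeta>)"
  define w where "w = Complex a b"
  define u where "u = w^3 / (complex_of_real \<tau>)^2"
  have "T1 \<eta> \<zeta> \<tau> = u + of_real (27/4)"
    unfolding T1_def u_def w_def a_def b_def shifted_squares_sum_eq by (simp add: Let_def)
  then have Re_u: "Re u < 0" and norm_u: "27/8 < cmod u"
    using near_negative_real[of u "27/4"] assms(2) by simp_all
  have \<tau>: "\<tau>^2 > 0"
    using assms(1) by simp
  have "Re u = Re (w^3) / \<tau>^2"
    unfolding u_def by (metis Re_divide_of_real of_real_power)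
  then have "a^3 - 3 * a * b^2 < 0"
    using Re_u \<tau> by (simp add: w_def Re_Complex_cube divide_less_0_iff)
  moreover have b_le: "b^2 \<le> 8 * (a + 2)"
    using zero_le_power2[of "\<eta> - \<zeta>"] unfolding a_def b_def by (simp add: power2_eq_square algebra_simps)
  ultimately have a_lt: "a < 26"
    by (rule cubic_negative_imp_bounded[rotated])
  have "a \<ge> -2"
    unfolding a_def using zero_le_power2[of \<eta>] zero_le_power2[of \<zeta>] by linarith
  then have "a^2 \<le> 26^2"
    using a_lt by (intro power2_le_iff_abs_le[THEN iffD2]) auto
  then have "(cmod w)^2 \<le> 30^2"
    using b_le a_lt by (simp add: w_def cmod_def)
  then have "cmod w \<le> 30"
    by (rule power2_le_imp_le) simp
  then have "(cmod w)^3 \<le> 30^3"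
    by (rule power_mono) simp
  moreover have "cmod u = (cmod w)^3 / \<tau>^2"
    unfolding u_def by (simp add: norm_divide norm_power)
  ultimately have "\<tau>^2 \<le> 8000"
    using norm_u \<tau> by (simp add: less_divide_eq)
  moreover have "\<eta>^2 + \<zeta>^2 < 28"
    using a_lt unfolding a_def by simp
  ultimately show ?thesis by linarith
qed

theorem mainTheorem7:
  shows "\<exists>K :: (real \<times> real \<times> real) set. compact K \<and>
     (\<forall>\<eta> \<zeta> \<tau>. (\<eta>, \<zeta>, \<tau>) \<notin> K \<longrightarrow> \<tau> \<noteq> 0 \<longrightarrow>
        cmod (T1 \<eta> \<zeta> \<tau>) \<ge> 27/8)"
proof (intro exI[of _ "cball 0 100"] conjI allI impI)
  show "compact (cball (0::real \<times> real \<times> real) 100)" by simp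
  fix \<eta> \<zeta> \<tau> :: real
  assume outside: "(\<eta>, \<zeta>, \<tau>) \<notin> cball 0 100" and "\<tau> \<noteq> 0"
  show "cmod (T1 \<eta> \<zeta> \<tau>) \<ge> 27/8"
  proof (rule ccontr)
    assume "\<not> ?thesis"
    then have "\<eta>^2 + \<zeta>^2 + \<tau>^2 \<le> 10000"
      using T1_small_imp_bounded \<open>\<tau> \<noteq> 0\<close> by simp
    then have "sqrt (\<eta>^2 + (\<zeta>^2 + \<tau>^2)) \<le> sqrt (100^2)"
      by (intro real_sqrt_le_mono) simp
    then have "norm (\<eta>, \<zeta>, \<tau>) \<le> 100"
      by (simp add: norm_Pair)
    with outside show False by simp
  qed
qed

end
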